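(* Let $\mathcal{M}=(E_t,\mathcal{T})$ be a simple oriented matroid, let $k$ be an integer with $1\le k\le|\mathcal{T}|/2$, and put $h=\lfloor(|\mathcal{T}|-k+1)/2\rfloor$ and $\mathcal{P}=\bigcup_{e\in E_t}\binom{\mathcal{T}^+_e}{h}$. Then \[ \mathring{\kappa}^{\ast}_k(\mathcal{M})=\binom{|\mathcal{T}|/2}{k}2^k+\sum_{\substack{G\in\boldsymbol{\mathcal{E}}(\mathcal{P}):\\ 0<|G|\le|\mathcal{T}|-k}}\mu_{\boldsymbol{\mathcal{E}}}(\hat0,G)\sum_{j=0}^{k}\binom{|G\cup-G|-|G|}{j}\binom{\tfrac12(|\mathcal{T}|-|G\cup-G|)}{k-j}2^{k-j}. \]
   Context: Let $t\ge 1$ and $E_t=\{1,\dots,t\}$. $\mathcal{M}=(E_t,\mathcal{T})$ is a simple oriented matroid with set of topes $\mathcal{T}\subseteq\{+,-\}^{E_t}$, closed under negation. For $e\in E_t$, $\mathcal{T}^+_e=\{T\in\mathcal{T}: T(e)=+\}$. For $G\subseteq\mathcal{T}$, $-G=\{-T:T\in G\}$. $\binom{X}{j}$ denotes the family of $j$-element subsets of $X$. For a family $\mathcal{G}$ of subsets of $\mathcal{T}$, $\boldsymbol{\mathcal{E}}(\mathcal{G})$ is the lattice consisting of all unions $\bigcup_{F\in\mathcal{F}}F$ over nonempty subfamilies $\mathcal{F}\subseteq\mathcal{G}$, ordered by inclusion, together with a new least element $\hat0$ interpreted as the empty set (with $|\hat0|=0$); $\mu_{\boldsymbol{\mathcal{E}}}$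 is its Möbius function. A tope committee for $\mathcal{M}$ is a subset $\mathcal{K}^{\ast}\subset\mathcal{T}$ with $|\{T\in\mathcal{K}^{\ast}: T(e)=+\}|>\tfrac12|\mathcal{K}^{\ast}|$ for every $e\in E_t$; $\mathring{\kappa}^{\ast}_k(\mathcal{M})$ is the number of tope committees of cardinality $k$ containing no pair of opposite topes. Binomial coefficients $\binom{n}{j}$ are $0$ when $j>n$ or $j<0$. *)

theory Defs
  imports Main
begin

(* Sign vectors on the ground set E_t = {1..t}: functions nat => int with values in
   {-1,0,1} (meaning -,0,+), equal to 0 outside {1..t}. *)

definition sign_vector :: "nat \<Rightarrow> (nat \<Rightarrow> int) \<Rightarrow> bool" where
  "sign_vector t X \<longleftrightarrow> (\<forall>e. X e \<in> {-1,0,1}) \<and> (\<forall>e. e \<notin> {1..t} \<longrightarrow> X e = 0)"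

definition sv_neg :: "(nat \<Rightarrow> int) \<Rightarrow> (nat \<Rightarrow> int)" where
  "sv_neg X = (\<lambda>e. - X e)"

definition sv_comp :: "(nat \<Rightarrow> int) \<Rightarrow> (nat \<Rightarrow> int) \<Rightarrow> (nat \<Rightarrow> int)" where
  "sv_comp X Y = (\<lambda>e. if X e \<noteq> 0 then X e else Y e)"

definition sv_sep :: "(nat \<Rightarrow> int) \<Rightarrow> (nat \<Rightarrow> int) \<Rightarrow> nat set" where
  "sv_sep X Y = {e. X e \<noteq> 0 \<and> X e = - Y e}"

definition sv_conf_le :: "(nat \<Rightarrow> int) \<Rightarrow> (nat \<Rightarrow> int) \<Rightarrow> bool" where
  "sv_conf_le X Y \<longleftrightarrow> (\<forall>e. X e \<noteq> 0 \<longrightarrow> X e = Y e)"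

(* Covector axioms of an oriented matroid on E_t = {1..t} *)
definition oriented_matroid :: "nat \<Rightarrow> (nat \<Rightarrow> int) set \<Rightarrow> bool" where
  "oriented_matroid t L \<longleftrightarrow>
     (\<forall>X\<in>L. sign_vector t X) \<and>
     (\<lambda>e. 0) \<in> L \<and>
     (\<forall>X\<in>L. sv_neg X \<in> L) \<and>
     (\<forall>X\<in>L. \<forall>Y\<in>L. sv_comp X Y \<in> L) \<and>
     (\<forall>X\<in>L. \<forall>Y\<in>L. \<forall>e\<in>sv_sep X Y. \<exists>Z\<in>L. Z e = 0 \<and>
          (\<forall>f. f \<notin> sv_sep X Y \<longrightarrow> Z f = sv_comp X Y f))"

definition simple_om :: "nat \<Rightarrow> (nat \<Rightarrow> int) set \<Rightarrow> bool" where
  "simple_om t L \<longleftrightarrow>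
     (\<forall>e\<in>{1..t}. \<exists>X\<in>L. X e \<noteq> 0) \<and>
     (\<forall>e\<in>{1..t}. \<forall>f\<in>{1..t}. e \<noteq> f \<longrightarrow>
        \<not> (\<forall>X\<in>L. X e = X f) \<and> \<not> (\<forall>X\<in>L. X e = - X f))"

definition topes :: "(nat \<Rightarrow> int) set \<Rightarrow> (nat \<Rightarrow> int) set" where
  "topes L = {T\<in>L. \<forall>Y\<in>L. sv_conf_le T Y \<longrightarrow> Y = T}"

definition simple_om_topes :: "nat \<Rightarrow> (nat \<Rightarrow> int) set \<Rightarrow> bool" where
  "simple_om_topes t \<T> \<longleftrightarrow> (\<exists>L. oriented_matroid t L \<and> simple_om t L \<and> \<T> = topes L)"

definition pos_topes :: "(nat \<Rightarrow> int) set \<Rightarrow> nat \<Rightarrow> (nat \<Rightarrow> int) set" where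
  "pos_topes \<T> e = {T\<in>\<T>. T e = 1}"

definition neg_set :: "(nat \<Rightarrow> int) set \<Rightarrow> (nat \<Rightarrow> int) set" where
  "neg_set G = sv_neg ` G"

definition tope_committee :: "nat \<Rightarrow> (nat \<Rightarrow> int) set \<Rightarrow> (nat \<Rightarrow> int) set \<Rightarrow> bool" where
  "tope_committee t \<T> K \<longleftrightarrow> K \<subset> \<T> \<and>
     (\<forall>e\<in>{1..t}. 2 * card {T\<in>K. T e = 1} > card K)"

definition kappa_ring_star :: "nat \<Rightarrow> (nat \<Rightarrow> int) set \<Rightarrow> nat \<Rightarrow> nat" where
  "kappa_ring_star t \<T> k = card {K. tope_committee t \<T> K \<and> card K = k \<and>
                                    (\<forall>T\<in>K. sv_neg T \<notin> K)}"

(* The lattice E(G): unions of nonempty subfamilies, plus a bottom element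
   represented by the empty set (|bottom| = 0). *)
definition union_lattice :: "'a set set \<Rightarrow> 'a set set" where
  "union_lattice \<G> = insert {} {\<Union>\<F> | \<F>. \<F> \<subseteq> \<G> \<and> \<F> \<noteq> {}}"

function mobius :: "'a set set \<Rightarrow> 'a set \<Rightarrow> 'a set \<Rightarrow> int" where
  "mobius S x y =
     (if x = y then 1
      else if x \<subset> y \<and> finite y
        then - (\<Sum>z\<in>{z\<in>S. x \<subseteq> z \<and> z \<subset> y}. mobius S x z)
      else 0)"
  by auto
termination
  by (relation "measure (\<lambda>(S, x, y). card y)") (auto intro: psubset_card_mono)

end

theory Submission
  imports Defs
begin

(* Write h = (|T| - k + 1) div 2.  Since every coordinate splits the topes into two halves
   T^+_e and -T^+_e of size |T|/2, a k-set K of topes is a strict majority on e exactly when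
   the complement T - K contains no h-subset of T^+_e.  Hence the committees counted by
   kappa_ring_star are the opposite-free k-subsets K of T such that no member of the family P
   lies inside T - K. *)

definition opposite_free :: "('a \<Rightarrow> 'a) \<Rightarrow> 'a set \<Rightarrow> bool" where
  "opposite_free n K \<longleftrightarrow> (\<forall>x\<in>K. n x \<notin> K)"

definition free_subsets :: "('a \<Rightarrow> 'a) \<Rightarrow> 'a set \<Rightarrow> nat \<Rightarrow> 'a set set" where
  "free_subsets n W k = {K. K \<subseteq> W \<and> card K = k \<and> opposite_free n K}"

definition unpaired :: "('a \<Rightarrow> 'a) \<Rightarrow> 'a set \<Rightarrow> 'a set" where
  "unpaired n W = {x\<in>W. n x \<notin> W}"

definition paired :: "('a \<Rightarrow> 'a) \<Rightarrow> 'a set \<Rightarrow> 'a set" where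
  "paired n W = {x\<in>W. n x \<in> W}"

(* The closed count: choose j unpaired elements and k - j of the p pairs, each pair in two ways. *)
definition free_count :: "nat \<Rightarrow> nat \<Rightarrow> nat \<Rightarrow> int" where
  "free_count s p k = (\<Sum>j=0..k. int (s choose j) * int (p choose (k - j)) * 2 ^ (k - j))"

(* Boundary values and the two Pascal-type recurrences of free_count, mirroring the removal
   of an unpaired element resp. of a whole pair. *)
lemma free_count_0: "free_count s p 0 = 1"
  by (simp add: free_count_def)

lemma free_count_empty: "free_count 0 0 (Suc k) = 0"
  unfolding free_count_def by (rule sum.neutral) (auto simp: binomial_eq_0_iff)

lemma free_count_no_unpaired: "free_count 0 p k = int (p choose k) * 2 ^ k"
proof (cases k)
  case (Suc k')
  then show ?thesis
    unfolding free_count_def Suc by (subst sum.atLeast0_atMost_Suc_shift) simp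
qed (simp add: free_count_def)

lemma free_count_Suc_unpaired:
  "free_count (Suc s) p (Suc k) = free_count s p (Suc k) + free_count s p k"
proof -
  have "free_count (Suc s) p (Suc k) = int (p choose Suc k) * 2 ^ Suc k +
     (\<Sum>j=0..k. int (Suc s choose Suc j) * int (p choose (k - j)) * 2 ^ (k - j))"
    unfolding free_count_def by (subst sum.atLeast0_atMost_Suc_shift) simp
  also have "\<dots> = int (p choose Suc k) * 2 ^ Suc k +
     (\<Sum>j=0..k. int (s choose Suc j) * int (p choose (k - j)) * 2 ^ (k - j)) +
     (\<Sum>j=0..k. int (s choose j) * int (p choose (k - j)) * 2 ^ (k - j))"
    by (simp add: sum.distrib algebra_simps)
  also have "int (p choose Suc k) * 2 ^ Suc k +
     (\<Sum>j=0..k. int (s choose Suc j) * int (p choose (k - j)) * 2 ^ (k - j)) = free_count s p (Suc k)"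
    unfolding free_count_def by (subst sum.atLeast0_atMost_Suc_shift) simp
  finally show ?thesis by (simp add: free_count_def)
qed

lemma free_count_Suc_pair:
  "free_count s (Suc p) (Suc k) = free_count s p (Suc k) + 2 * free_count s p k"
proof -
  have "free_count s (Suc p) (Suc k) = int (s choose Suc k) +
     (\<Sum>j=0..k. int (s choose j) * int (Suc p choose Suc (k - j)) * 2 ^ Suc (k - j))"
    unfolding free_count_def by (subst sum.atLeast0_atMost_Suc) (simp add: Suc_diff_le)
  also have "\<dots> = int (s choose Suc k) +
     (\<Sum>j=0..k. int (s choose j) * int (p choose Suc (k - j)) * 2 ^ Suc (k - j)) +
     2 * (\<Sum>j=0..k. int (s choose j) * int (p choose (k - j)) * 2 ^ (k - j))"
    by (simp add: sum.distrib sum_distrib_left algebra_simps)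
  also have "int (s choose Suc k) +
     (\<Sum>j=0..k. int (s choose j) * int (p choose Suc (k - j)) * 2 ^ Suc (k - j)) = free_count s p (Suc k)"
    unfolding free_count_def by (subst sum.atLeast0_atMost_Suc) (simp add: Suc_diff_le)
  finally show ?thesis by (simp add: free_count_def)
qed

lemma finite_free_subsets: "finite W \<Longrightarrow> finite (free_subsets n W k)"
  unfolding free_subsets_def by (rule finite_subset[of _ "Pow W"]) auto

lemma free_subsets_0: "finite W \<Longrightarrow> free_subsets n W 0 = {{}}"
  unfolding free_subsets_def opposite_free_def by (auto dest: finite_subset)

lemma free_subsets_too_few: "finite W \<Longrightarrow> card W < k \<Longrightarrow> free_subsets n W k = {}"
  unfolding free_subsets_def by (auto dest: card_mono)

lemma opposite_free_insert:
  assumes "opposite_free n K" "n x \<notin> K" "n x \<noteq> x" and inv: "\<And>y. n (n y) = y"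
  shows "opposite_free n (insert x K)"
  using assms unfolding opposite_free_def by (metis insert_iff)

(* Removal recurrence: split by whether x is chosen; if it is, its partner n x is excluded. *)
lemma free_subsets_remove:
  assumes fin: "finite W" and x: "x \<in> W" "n x \<noteq> x" and inv: "\<And>y. n (n y) = y"
  shows "card (free_subsets n W (Suc k)) =
         card (free_subsets n (W - {x}) (Suc k)) + card (free_subsets n (W - {x, n x}) k)"
proof -
  let ?avoid = "free_subsets n (W - {x}) (Suc k)"
  let ?rest = "free_subsets n (W - {x, n x}) k"
  have split: "free_subsets n W (Suc k) = ?avoid \<union> insert x ` ?rest"
  proof (intro set_eqI iffI)
    fix K assume K: "K \<in> free_subsets n W (Suc k)"
    show "K \<in> ?avoid \<union> insert x ` ?rest"
    proof (cases "x \<in> K")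
      case True
      have "finite K" using K fin by (auto simp: free_subsets_def dest: finite_subset)
      then have "K - {x} \<in> ?rest"
        using K True by (auto simp: free_subsets_def opposite_free_def)
      then show ?thesis using True by (metis UnI2 image_eqI insert_Diff)
    qed (use K in \<open>auto simp: free_subsets_def\<close>)
  next
    fix K assume "K \<in> ?avoid \<union> insert x ` ?rest"
    then show "K \<in> free_subsets n W (Suc k)"
    proof
      assume "K \<in> insert x ` ?rest"
      then obtain K' where K': "K' \<in> ?rest" "K = insert x K'" by blast
      have "finite K'" "x \<notin> K'"
        using K' fin by (auto simp: free_subsets_def dest: finite_subset)
      moreover have "opposite_free n K"
        using K' x(2) opposite_free_insert[OF _ _ _ inv] by (auto simp: free_subsets_def)
      ultimately show ?thesis using K' x(1) by (auto simp: free_subsets_def)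
    qed (auto simp: free_subsets_def)
  qed
  have "?avoid \<inter> insert x ` ?rest = {}" by (auto simp: free_subsets_def)
  moreover have "inj_on (insert x) ?rest"
  proof (rule inj_onI)
    fix A B assume "A \<in> ?rest" "B \<in> ?rest" "insert x A = insert x B"
    then show "A = B" by (auto simp: free_subsets_def)
  qed
  ultimately show ?thesis unfolding split using fin
    by (simp add: card_Un_disjoint card_image finite_free_subsets)
qed

lemma remove_unpaired:
  assumes "x \<in> W" "n x \<notin> W" and inv: "\<And>y. n (n y) = y"
  shows "unpaired n (W - {x}) = unpaired n W - {x}" "paired n (W - {x}) = paired n W"
proof -
  have "\<And>y. y \<in> W \<Longrightarrow> n y \<noteq> x" using assms by metis
  then show "unpaired n (W - {x}) = unpaired n W - {x}" "paired n (W - {x}) = paired n W"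
    using assms unfolding unpaired_def paired_def by auto
qed

lemma remove_pair:
  assumes "x \<in> W" "n x \<in> W" and inv: "\<And>y. n (n y) = y"
  shows "unpaired n (W - {x, n x}) = unpaired n W"
    and "paired n (W - {x, n x}) = paired n W - {x, n x}"
proof -
  have "\<And>y. y \<noteq> x \<Longrightarrow> y \<noteq> n x \<Longrightarrow> n y \<noteq> x \<and> n y \<noteq> n x" using inv by metis
  then show "unpaired n (W - {x, n x}) = unpaired n W"
    and "paired n (W - {x, n x}) = paired n W - {x, n x}"
    using assms unfolding unpaired_def paired_def by auto
qed

lemma card_paired_remove:
  assumes "finite W" "x \<in> W" "n x \<in> W" "n x \<noteq> x" and inv: "\<And>y. n (n y) = y"
  shows "card (paired n W) = Suc (Suc (card (paired n W - {x, n x})))"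
proof -
  have "{x, n x} \<subseteq> paired n W" using assms unfolding paired_def by auto
  moreover have "finite (paired n W)" using assms(1) by (simp add: paired_def)
  moreover have "card {x, n x} = 2" using assms(4) by simp
  ultimately show ?thesis
    using card_mono[of "paired n W" "{x, n x}"] by (simp add: card_Diff_subset)
qed

lemma card_free_subsets:
  assumes "finite W" and inv: "\<And>y. n (n y) = y" and fpf: "\<forall>x\<in>W. n x \<noteq> x"
  shows "int (card (free_subsets n W k)) =
         free_count (card (unpaired n W)) (card (paired n W) div 2) k"
  using assms(1) fpf
proof (induction "card W" arbitrary: W k rule: less_induct)
  case less
  show ?case
  proof (cases k)
    case 0
    then show ?thesis using less.prems by (simp add: free_subsets_0 free_count_0)
  next
    case (Suc k')
    show ?thesis
    proof (cases "W = {}")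
      case True
      then show ?thesis using Suc
        by (simp add: free_subsets_too_few unpaired_def paired_def free_count_empty)
    next
      case False
      then obtain x where x: "x \<in> W" by blast
      have nx: "n x \<noteq> x" using x less.prems by auto
      have IH: "\<And>V j. V \<subset> W \<Longrightarrow> int (card (free_subsets n V j)) =
                   free_count (card (unpaired n V)) (card (paired n V) div 2) j"
      proof -
        fix V j assume "V \<subset> W"
        then have "card V < card W" "finite V" "\<forall>x\<in>V. n x \<noteq> x"
          using psubset_card_mono[OF less.prems(1)] finite_subset[OF _ less.prems(1)]
            less.prems(2) by blast+
        then show "int (card (free_subsets n V j)) =
                   free_count (card (unpaired n V)) (card (paired n V) div 2) j"
          using less.hyps by blast
      qed
      have rec: "int (card (free_subsets n W (Suc k'))) = int (card (free_subsets n (W - {x}) (Suc k')))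
                 + int (card (free_subsets n (W - {x, n x}) k'))"
        using free_subsets_remove[OF less.prems(1) x nx inv] by simp
      show ?thesis
      proof (cases "n x \<in> W")
        case False
        let ?s = "card (unpaired n W - {x})" and ?p = "card (paired n W) div 2"
        have IH': "\<And>j. int (card (free_subsets n (W - {x}) j)) = free_count ?s ?p j"
          using IH[of "W - {x}"] x remove_unpaired[OF x False inv] by auto
        have "W - {x, n x} = W - {x}" using False by auto
        then have "int (card (free_subsets n W k)) = free_count ?s ?p (Suc k') + free_count ?s ?p k'"
          unfolding Suc rec by (simp add: IH')
        also have "\<dots> = free_count (Suc ?s) ?p (Suc k')"
          by (rule free_count_Suc_unpaired[symmetric])
        also have "Suc ?s = card (unpaired n W)"
          using x False less.prems(1) by (subst card_Suc_Diff1) (auto simp: unpaired_def)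
        finally show ?thesis unfolding Suc .
      next
        case True
        let ?V = "W - {x, n x}"
        have "int (card (free_subsets n (W - {x}) (Suc k'))) =
              int (card (free_subsets n ?V (Suc k'))) + int (card (free_subsets n ?V k'))"
        proof -
          have "W - {x} - {n x} = ?V" "W - {x} - {n x, n (n x)} = ?V" using inv by auto
          then show ?thesis
            using free_subsets_remove[of "W - {x}" "n x" n k'] less.prems(1) True nx inv by simp
        qed
        moreover have "\<And>j. int (card (free_subsets n ?V j)) =
            free_count (card (unpaired n W)) (card (paired n ?V) div 2) j"
          using IH[of ?V] x remove_pair[OF x True inv] by auto
        moreover have "card (paired n W) div 2 = Suc (card (paired n ?V) div 2)"
          using card_paired_remove[OF less.prems(1) x True nx inv] remove_pair[OF x True inv]
          by simp
        ultimately show ?thesis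
          unfolding Suc rec by (simp add: free_count_Suc_pair)
      qed
    qed
  qed
qed

(* Specialisation to complements T - G in an n-closed set T: the unpaired elements are
   n`G - G, the pairs fill T - (G \<union> n`G). *)
lemma card_free_subsets_complement:
  assumes fin: "finite T" and closed: "\<And>x. x \<in> T \<Longrightarrow> n x \<in> T" and inv: "\<And>y. n (n y) = y"
    and fpf: "\<forall>x\<in>T. n x \<noteq> x" and G: "G \<subseteq> T"
  shows "int (card (free_subsets n (T - G) k)) =
    free_count (card (G \<union> n ` G) - card G) ((card T - card (G \<union> n ` G)) div 2) k"
proof -
  have nG: "n ` G \<subseteq> T" using G closed by auto
  have "unpaired n (T - G) = n ` G - G"
    using G closed inv unfolding unpaired_def by (auto, metis image_eqI)
  moreover have "paired n (T - G) = T - (G \<union> n ` G)"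
    using G closed inv unfolding paired_def by (auto, metis image_eqI)
  moreover have "card (n ` G - G) = card (G \<union> n ` G) - card G"
    using finite_subset[OF G fin] finite_subset[OF nG fin]
    by (metis Un_Diff_cancel add_diff_cancel_left' card_Un_disjoint Diff_disjoint finite_Diff)
  moreover have "card (T - (G \<union> n ` G)) = card T - card (G \<union> n ` G)"
    using G nG fin by (subst card_Diff_subset) (auto dest: finite_subset)
  ultimately show ?thesis
    using card_free_subsets[of "T - G" n k] fin inv fpf by simp
qed

(* The defining equation of mobius unfolds indefinitely under the simplifier;
   it is only used by explicit substitution. *)
declare mobius.simps [simp del]

lemma union_lattice_subset: "\<forall>A\<in>P. A \<subseteq> U \<Longrightarrow> union_lattice P \<subseteq> Pow U"
  unfolding union_lattice_def by auto

lemma finite_union_lattice: "finite U \<Longrightarrow> \<forall>A\<in>P. A \<subseteq> U \<Longrightarrow> finite (union_lattice P)"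
  using union_lattice_subset by (metis finite_Pow_iff finite_subset)

(* Moebius function summed over the elements of the union lattice below S: the sum vanishes
   exactly when some generator lies in S, because then the elements below S form the interval
   below the join of those generators. *)
lemma mobius_sum_below:
  assumes fin: "finite U" and P: "\<forall>A\<in>P. A \<subseteq> U \<and> A \<noteq> {}"
  shows "(\<Sum>G\<in>{G\<in>union_lattice P. G \<subseteq> S}. mobius (union_lattice P) {} G)
         = (if \<exists>A\<in>P. A \<subseteq> S then 0 else 1)"
proof -
  let ?L = "union_lattice P"
  let ?J = "\<Union>{A\<in>P. A \<subseteq> S}"
  have LU: "?L \<subseteq> Pow U" using P union_lattice_subset by blast
  have finL: "finite ?L" using P fin finite_union_lattice by blast
  have below_J: "{G\<in>?L. G \<subseteq> S} = {G\<in>?L. G \<subseteq> ?J}"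
    unfolding union_lattice_def by auto
  show ?thesis
  proof (cases "\<exists>A\<in>P. A \<subseteq> S")
    case False
    then have "{G\<in>?L. G \<subseteq> S} = {{}}" unfolding below_J union_lattice_def by auto
    then show ?thesis using False by (simp add: mobius.simps)
  next
    case True
    then obtain A where A: "A \<in> P" "A \<subseteq> S" by blast
    have JL: "?J \<in> ?L" using A unfolding union_lattice_def by blast
    have "?J \<noteq> {}" "finite ?J" using A P JL LU fin by (auto dest: finite_subset)
    then have mu_J: "mobius ?L {} ?J = - (\<Sum>z\<in>{z\<in>?L. {} \<subseteq> z \<and> z \<subset> ?J}. mobius ?L {} z)"
      by (subst mobius.simps) auto
    have split: "{G\<in>?L. G \<subseteq> ?J} = insert ?J {z\<in>?L. {} \<subseteq> z \<and> z \<subset> ?J}"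
      using JL by auto
    have "(\<Sum>G\<in>{G\<in>?L. G \<subseteq> S}. mobius ?L {} G) = 0"
      unfolding below_J split using finL mu_J by (subst sum.insert) auto
    then show ?thesis using True by simp
  qed
qed

lemma mobius_inclusion_exclusion:
  assumes fin: "finite U" and P: "\<forall>A\<in>P. A \<subseteq> U \<and> A \<noteq> {}" and finX: "finite X"
  shows "int (card {x\<in>X. \<not> (\<exists>A\<in>P. A \<subseteq> C x)}) =
    (\<Sum>G\<in>union_lattice P. mobius (union_lattice P) {} G * int (card {x\<in>X. G \<subseteq> C x}))"
proof -
  let ?L = "union_lattice P"
  have finL: "finite ?L" using P fin finite_union_lattice by blast
  have "int (card {x\<in>X. \<not> (\<exists>A\<in>P. A \<subseteq> C x)}) =
        (\<Sum>x\<in>X. if \<not> (\<exists>A\<in>P. A \<subseteq> C x) then 1 else 0)"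
    unfolding sum.inter_filter[OF finX, symmetric] by simp
  also have "\<dots> = (\<Sum>x\<in>X. if \<exists>A\<in>P. A \<subseteq> C x then 0 else 1)"
    by (rule sum.cong) auto
  also have "\<dots> = (\<Sum>x\<in>X. \<Sum>G\<in>{G\<in>?L. G \<subseteq> C x}. mobius ?L {} G)"
    using mobius_sum_below[OF fin P] by simp
  also have "\<dots> = (\<Sum>G\<in>?L. \<Sum>x\<in>{x\<in>X. G \<subseteq> C x}. mobius ?L {} G)"
    by (rule sum.swap_restrict[OF finX finL])
  also have "\<dots> = (\<Sum>G\<in>?L. mobius ?L {} G * int (card {x\<in>X. G \<subseteq> C x}))"
    by (simp add: mult.commute)
  finally show ?thesis .
qed

lemma free_subsets_avoiding:
  "G \<subseteq> T \<Longrightarrow> {K\<in>free_subsets n T k. G \<subseteq> T - K} = free_subsets n (T - G) k"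
  unfolding free_subsets_def by auto

(* The bottom element contributes the unrestricted count, and elements G of the lattice with
   |G| > |T| - k contribute nothing since T - G is too small. *)
theorem card_free_subsets_avoiding_family:
  fixes n :: "'a \<Rightarrow> 'a"
  assumes fin: "finite T" and closed: "\<And>x. x \<in> T \<Longrightarrow> n x \<in> T" and inv: "\<And>y. n (n y) = y"
    and fpf: "\<forall>x\<in>T. n x \<noteq> x" and P: "\<forall>A\<in>P. A \<subseteq> T \<and> A \<noteq> {}"
  shows "int (card {K\<in>free_subsets n T k. \<not> (\<exists>A\<in>P. A \<subseteq> T - K)}) =
           int ((card T div 2) choose k) * 2 ^ k
         + (\<Sum>G\<in>{G\<in>union_lattice P. 0 < card G \<and> card G \<le> card T - k}.
              mobius (union_lattice P) {} G *
              free_count (card (G \<union> n ` G) - card G) ((card T - card (G \<union> n ` G)) div 2) k)"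
proof -
  let ?L = "union_lattice P" and ?mu = "mobius (union_lattice P) {}"
  define c where "c G = free_count (card (G \<union> n ` G) - card G) ((card T - card (G \<union> n ` G)) div 2) k"
    for G
  have PT: "\<forall>A\<in>P. A \<subseteq> T" using P by blast
  note LT = union_lattice_subset[OF PT] and finL = finite_union_lattice[OF fin PT]
  have count: "int (card {K\<in>free_subsets n T k. G \<subseteq> T - K}) = c G" if "G \<in> ?L" for G
    using that LT card_free_subsets_complement[OF fin closed inv fpf, of G k]
    by (auto simp: free_subsets_avoiding c_def)
  have vanish: "c G = 0" if "G \<in> ?L" "card T - k < card G" for G
  proof -
    have "G \<subseteq> T" using that LT by auto
    moreover have "card G \<le> card T" using \<open>G \<subseteq> T\<close> fin by (rule card_mono[rotated])
    ultimately have "card (T - G) < k"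
      using that fin by (simp add: card_Diff_subset finite_subset)
    then show ?thesis
      using count[OF that(1)] \<open>G \<subseteq> T\<close> fin by (simp add: free_subsets_avoiding free_subsets_too_few)
  qed
  have "{} \<in> ?L" unfolding union_lattice_def by simp
  have "int (card {K\<in>free_subsets n T k. \<not> (\<exists>A\<in>P. A \<subseteq> T - K)}) = (\<Sum>G\<in>?L. ?mu G * c G)"
    using mobius_inclusion_exclusion[OF fin P finite_free_subsets[OF fin]] count by simp
  also have "\<dots> = ?mu {} * c {} + (\<Sum>G\<in>?L - {{}}. ?mu G * c G)"
    using \<open>{} \<in> ?L\<close> finL by (simp add: sum.remove)
  also have "?mu {} * c {} = int ((card T div 2) choose k) * 2 ^ k"
    by (simp add: c_def mobius.simps free_count_no_unpaired)
  also have "(\<Sum>G\<in>?L - {{}}. ?mu G * c G) =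
             (\<Sum>G\<in>{G\<in>?L. 0 < card G \<and> card G \<le> card T - k}. ?mu G * c G)"
  proof (intro sum.mono_neutral_right ballI)
    fix G assume G: "G \<in> ?L - {{}} - {G\<in>?L. 0 < card G \<and> card G \<le> card T - k}"
    then have "finite G" "G \<noteq> {}" using LT fin by (auto dest: finite_subset)
    then have "card T - k < card G" using G by auto
    then show "?mu G * c G = 0" using vanish G by simp
  qed (use finL in auto)
  finally show ?thesis unfolding c_def .
qed

lemma sv_neg_neg [simp]: "sv_neg (sv_neg X) = X"
  by (simp add: sv_neg_def)

(* Basic facts on the topes of a simple oriented matroid: finitely many, every coordinate of
   E_t is nonzero (by maximality, since each element is a non-loop), closed under negation. *)
lemma simple_om_topesE:
  assumes "simple_om_topes t \<T>"
  obtains L where "oriented_matroid t L" "simple_om t L" "\<T> = topes L"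
  using assms unfolding simple_om_topes_def by blast

lemma finite_topes:
  assumes "simple_om_topes t \<T>"
  shows "finite \<T>"
proof -
  obtain L where om: "oriented_matroid t L" and T: "\<T> = topes L"
    using assms by (rule simple_om_topesE)
  have "\<T> \<subseteq> {X. \<forall>e. (e \<in> {1..t} \<longrightarrow> X e \<in> {-1, 0, 1}) \<and> (e \<notin> {1..t} \<longrightarrow> X e = 0)}"
    using om T unfolding oriented_matroid_def topes_def sign_vector_def by auto
  then show ?thesis by (rule finite_subset) (rule finite_set_of_finite_funs; simp)
qed

lemma topes_sign:
  assumes "simple_om_topes t \<T>" "X \<in> \<T>" "e \<in> {1..t}"
  shows "X e = 1 \<or> X e = -1"
proof -
  obtain L where om: "oriented_matroid t L" and s: "simple_om t L" and T: "\<T> = topes L"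
    using assms(1) by (rule simple_om_topesE)
  obtain Y where Y: "Y \<in> L" "Y e \<noteq> 0" using s assms(3) unfolding simple_om_def by blast
  have XL: "X \<in> L" using assms(2) T by (simp add: topes_def)
  then have "sv_comp X Y \<in> L" using om Y unfolding oriented_matroid_def by blast
  moreover have "sv_conf_le X (sv_comp X Y)" unfolding sv_conf_le_def sv_comp_def by auto
  ultimately have "sv_comp X Y = X" using assms(2) T unfolding topes_def by auto
  then have "X e \<noteq> 0" using Y by (metis sv_comp_def)
  moreover have "X e \<in> {-1, 0, 1}"
    using om XL unfolding oriented_matroid_def sign_vector_def by auto
  ultimately show ?thesis by auto
qed

lemma topes_sv_neg:
  assumes "simple_om_topes t \<T>" "X \<in> \<T>"
  shows "sv_neg X \<in> \<T>"
proof -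
  obtain L where om: "oriented_matroid t L" and T: "\<T> = topes L"
    using assms(1) by (rule simple_om_topesE)
  have neg_L: "\<And>Y. Y \<in> L \<Longrightarrow> sv_neg Y \<in> L" using om unfolding oriented_matroid_def by blast
  have XL: "X \<in> L" using assms(2) T by (simp add: topes_def)
  have "Y = sv_neg X" if "Y \<in> L" "sv_conf_le (sv_neg X) Y" for Y
  proof -
    have "sv_conf_le X (sv_neg Y)" using that(2) unfolding sv_conf_le_def sv_neg_def
      by (metis add.inverse_inverse neg_equal_0_iff_equal)
    then have "sv_neg Y = X" using neg_L[OF that(1)] assms(2) T unfolding topes_def by auto
    then show ?thesis by auto
  qed
  then show ?thesis using neg_L[OF XL] T unfolding topes_def by auto
qed

(* Negation exchanges the topes positive and negative on e, so each side has half the topes. *)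
lemma card_pos_topes:
  assumes fin: "finite \<T>" and neg: "\<And>X. X \<in> \<T> \<Longrightarrow> sv_neg X \<in> \<T>"
    and sign: "\<And>X. X \<in> \<T> \<Longrightarrow> X e = 1 \<or> X e = -1"
  shows "card \<T> = 2 * card (pos_topes \<T> e)"
proof -
  have "\<T> = pos_topes \<T> e \<union> sv_neg ` pos_topes \<T> e"
  proof (intro set_eqI iffI)
    fix X assume X: "X \<in> \<T>"
    show "X \<in> pos_topes \<T> e \<union> sv_neg ` pos_topes \<T> e"
    proof (cases "X e = 1")
      case False
      then have "sv_neg X \<in> pos_topes \<T> e"
        using sign[OF X] neg[OF X] by (simp add: pos_topes_def sv_neg_def)
      then show ?thesis by (metis UnI2 image_eqI sv_neg_neg)
    qed (use X in \<open>simp add: pos_topes_def\<close>)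
  qed (use neg in \<open>auto simp: pos_topes_def\<close>)
  moreover have "pos_topes \<T> e \<inter> sv_neg ` pos_topes \<T> e = {}"
    by (auto simp: pos_topes_def sv_neg_def)
  moreover have "inj_on sv_neg (pos_topes \<T> e)" by (metis inj_onI sv_neg_neg)
  moreover have "finite (pos_topes \<T> e)" using fin by (simp add: pos_topes_def)
  ultimately show ?thesis by (metis card_Un_disjoint card_image finite_imageI mult_2)
qed

lemma majority_iff_no_large_subset:
  assumes finQ: "finite Q" and finK: "finite K" and k: "card K = k" "k \<le> card Q"
  shows "k < 2 * card (K \<inter> Q) \<longleftrightarrow>
         \<not> (\<exists>A. A \<subseteq> Q - K \<and> card A = (2 * card Q - k + 1) div 2)"
proof -
  let ?c = "card (K \<inter> Q)" and ?h = "(2 * card Q - k + 1) div 2"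
  have "?c \<le> k" "?c \<le> card Q" using finK finQ k by (auto intro: card_mono)
  then have "k < 2 * ?c \<longleftrightarrow> \<not> ?h \<le> card Q - ?c" using k(2) by linarith
  moreover have "card (Q - K) = card Q - ?c"
    using finK by (metis Int_commute card_Diff_subset_Int finite_Int)
  moreover have "(\<exists>A. A \<subseteq> Q - K \<and> card A = ?h) \<longleftrightarrow> ?h \<le> card (Q - K)"
  proof
    assume "\<exists>A. A \<subseteq> Q - K \<and> card A = ?h"
    then show "?h \<le> card (Q - K)" using finQ by (metis card_mono finite_Diff)
  next
    assume "?h \<le> card (Q - K)"
    then show "\<exists>A. A \<subseteq> Q - K \<and> card A = ?h" by (meson obtain_subset_with_card_n)
  qed
  ultimately show ?thesis by simp
qed

lemma committees_as_free_subsets: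
  fixes \<T> :: "(nat \<Rightarrow> int) set"
  assumes om: "simple_om_topes t \<T>" and k: "1 \<le> k" "2 * k \<le> card \<T>"
  defines "P \<equiv> {A. \<exists>e\<in>{1..t}. A \<subseteq> pos_topes \<T> e \<and> card A = (card \<T> - k + 1) div 2}"
  shows "{K. tope_committee t \<T> K \<and> card K = k \<and> (\<forall>X\<in>K. sv_neg X \<notin> K)} =
         {K\<in>free_subsets sv_neg \<T> k. \<not> (\<exists>A\<in>P. A \<subseteq> \<T> - K)}"
proof -
  have fin: "finite \<T>" using om by (rule finite_topes)
  have majority: "k < 2 * card {X\<in>K. X e = 1} \<longleftrightarrow>
                  \<not> (\<exists>A. A \<subseteq> pos_topes \<T> e \<and> A \<subseteq> \<T> - K \<and> card A = (card \<T> - k + 1) div 2)"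
    if K: "K \<subseteq> \<T>" "card K = k" and e: "e \<in> {1..t}" for K e
  proof -
    let ?Q = "pos_topes \<T> e"
    have half: "card \<T> = 2 * card ?Q"
      using fin topes_sv_neg[OF om] topes_sign[OF om _ e] by (rule card_pos_topes)
    have "{X\<in>K. X e = 1} = K \<inter> ?Q" using K by (auto simp: pos_topes_def)
    moreover have "finite ?Q" "finite K" using fin K by (auto simp: pos_topes_def finite_subset)
    ultimately have count: "k < 2 * card {X\<in>K. X e = 1} \<longleftrightarrow>
                     \<not> (\<exists>A. A \<subseteq> ?Q - K \<and> card A = (card \<T> - k + 1) div 2)"
      using majority_iff_no_large_subset[of ?Q K k] K k(2) half by simp
    have "A \<subseteq> ?Q - K \<longleftrightarrow> A \<subseteq> ?Q \<and> A \<subseteq> \<T> - K" for A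
      by (auto simp: pos_topes_def)
    then show ?thesis unfolding count by simp
  qed
  have committee: "tope_committee t \<T> K \<longleftrightarrow> (\<forall>e\<in>{1..t}. k < 2 * card {X\<in>K. X e = 1})"
    if "K \<subseteq> \<T>" "card K = k" for K
    using that k unfolding tope_committee_def by auto
  have avoid: "(\<forall>e\<in>{1..t}. k < 2 * card {X\<in>K. X e = 1}) \<longleftrightarrow> \<not> (\<exists>A\<in>P. A \<subseteq> \<T> - K)"
    if "K \<subseteq> \<T>" "card K = k" for K
  proof -
    have "(\<exists>A\<in>P. A \<subseteq> \<T> - K) \<longleftrightarrow> (\<exists>e\<in>{1..t}. \<exists>A. A \<subseteq> pos_topes \<T> e \<and>
            A \<subseteq> \<T> - K \<and> card A = (card \<T> - k + 1) div 2)"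
      unfolding P_def by blast
    then show ?thesis using majority[OF that] by simp
  qed
  show ?thesis
  proof (intro set_eqI iffI)
    fix K assume "K \<in> {K. tope_committee t \<T> K \<and> card K = k \<and> (\<forall>X\<in>K. sv_neg X \<notin> K)}"
    then have K: "K \<subseteq> \<T>" "card K = k" "opposite_free sv_neg K" "tope_committee t \<T> K"
      unfolding tope_committee_def opposite_free_def by auto
    then show "K \<in> {K\<in>free_subsets sv_neg \<T> k. \<not> (\<exists>A\<in>P. A \<subseteq> \<T> - K)}"
      using committee[OF K(1,2)] avoid[OF K(1,2)] by (simp add: free_subsets_def)
  next
    fix K assume "K \<in> {K\<in>free_subsets sv_neg \<T> k. \<not> (\<exists>A\<in>P. A \<subseteq> \<T> - K)}"
    then have K: "K \<subseteq> \<T>" "card K = k" "opposite_free sv_neg K" "\<not> (\<exists>A\<in>P. A \<subseteq> \<T> - K)"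
      unfolding free_subsets_def by auto
    then show "K \<in> {K. tope_committee t \<T> K \<and> card K = k \<and> (\<forall>X\<in>K. sv_neg X \<notin> K)}"
      using committee[OF K(1,2)] avoid[OF K(1,2)] by (simp add: opposite_free_def)
  qed
qed

theorem mainTheorem6:
  fixes t k :: nat and \<T> :: "(nat \<Rightarrow> int) set"
  assumes "t \<ge> 1"
    and "simple_om_topes t \<T>"
    and "1 \<le> k" and "2 * k \<le> card \<T>"
  defines "h \<equiv> (card \<T> - k + 1) div 2"
  defines "\<P> \<equiv> {A. \<exists>e\<in>{1..t}. A \<subseteq> pos_topes \<T> e \<and> card A = h}"
  shows "int (kappa_ring_star t \<T> k) =
           int ((card \<T> div 2) choose k) * 2 ^ k
         + (\<Sum>G\<in>{G\<in>union_lattice \<P>. 0 < card G \<and> card G \<le> card \<T> - k}.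
              mobius (union_lattice \<P>) {} G *
              (\<Sum>j=0..k. int ((card (G \<union> neg_set G) - card G) choose j) *
                  int (((card \<T> - card (G \<union> neg_set G)) div 2) choose (k - j)) *
                  2 ^ (k - j)))"
proof -
  have fin: "finite \<T>" using assms(2) by (rule finite_topes)
  have closed: "\<And>X. X \<in> \<T> \<Longrightarrow> sv_neg X \<in> \<T>" using assms(2) by (rule topes_sv_neg)
  have fpf: "\<forall>X\<in>\<T>. sv_neg X \<noteq> X"
  proof
    fix X assume "X \<in> \<T>"
    then have "X 1 = 1 \<or> X 1 = -1" using topes_sign[OF assms(2)] assms(1) by simp
    then have "sv_neg X 1 \<noteq> X 1" by (auto simp: sv_neg_def)
    then show "sv_neg X \<noteq> X" by metis
  qed
  have "h \<ge> 1" using assms(3,4) unfolding h_def by simp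
  then have P: "\<forall>A\<in>\<P>. A \<subseteq> \<T> \<and> A \<noteq> {}"
    unfolding \<P>_def pos_topes_def by auto
  have "kappa_ring_star t \<T> k = card {K\<in>free_subsets sv_neg \<T> k. \<not> (\<exists>A\<in>\<P>. A \<subseteq> \<T> - K)}"
    unfolding kappa_ring_star_def committees_as_free_subsets[OF assms(2-4)] \<P>_def h_def ..
  then show ?thesis
    using card_free_subsets_avoiding_family[OF fin closed sv_neg_neg fpf P, of k]
    by (simp add: free_count_def neg_set_def)
qed

end
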